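(* Let $n\geq 1$ be an integer and let $a,b\in\mathbb{C}$. Then $$C_n^{(a,b)}=a\,M_{n-1}^{(a+b,\,ab)},\qquad b\,S_n^{(a,b)}=(a+b)\,C_n^{(b,\,a+b)},\qquad S_n^{(a,b)}=(a+b)\,M_{n-1}^{(a+2b,\,ab+b^2)},$$ where $C_n^{(a,b)}$, $S_n^{(a,b)}$, $M_m^{(a,b)}$ are the weighted Catalan, Schröder and Motzkin numbers defined in the context.
   Context: Let $C_k=\frac{1}{k+1}\binom{2k}{k}$ be the Catalan numbers. For $m\geq 0$ and $a,b\in\mathbb{C}$: (1) The $(a,b)$-Motzkin number is $M_m^{(a,b)}=\sum_{k=0}^{\lfloor m/2\rfloor}\binom{m}{2k}C_k a^{m-2k}b^k$ (total weight of Motzkin paths of order $m$ with steps $(0,2),(2,0),(1,1)$ staying weakly above $y=x$, each $(1,1)$ step weighted $a$ and each $(2,0)$ step weighted $b$). (2) For $n\geq 1$, the valley type $(a,b)$-Catalan number is $C_n^{(a,b)}=\sum_{k=0}^{n-1}\frac{1}{n}\binom{n}{k}\binom{n}{k+1}a^{n-k}b^k$ (total weight of Catalan paths from $(0,0)$ to $(n,n)$ with steps $\mathbf N=(0,1)$, $\mathbf E=(1,0)$ never going below $y=x$, where each $\mathbf E$ step immediately followed by an $\mathbf N$ step has weight $b$ and every other $\mathbf E$ step has weight $a$). (3) The $(a,b)$-Schröder number is $S_n^{(a,b)}=\sum_{k=0}^{n}\binom{n+k}{2k}C_k a^{n-k}b^k$ (total weight of Schröder paths from $(0,0)$ to $(n,n)$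 with steps $(0,1),(1,0),(1,1)$ never going below $y=x$, each $(1,1)$ step weighted $a$ and each $(1,0)$ step weighted $b$). *)

theory Defs
  imports Complex_Main
begin

definition catalan :: "nat \<Rightarrow> nat" where
  "catalan k = ((2*k) choose k) div (k+1)"

definition motzkin_ab :: "complex \<Rightarrow> complex \<Rightarrow> nat \<Rightarrow> complex" where
  "motzkin_ab a b m = (\<Sum>k=0..m div 2. of_nat (m choose (2*k)) * of_nat (catalan k) * a^(m - 2*k) * b^k)"

definition catalan_ab :: "complex \<Rightarrow> complex \<Rightarrow> nat \<Rightarrow> complex" where
  "catalan_ab a b n = (\<Sum>k=0..n-1. (1 / of_nat n) * of_nat (n choose k) * of_nat (n choose (k+1)) * a^(n-k) * b^k)"

definition schroder_ab :: "complex \<Rightarrow> complex \<Rightarrow> nat \<Rightarrow> complex" where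
  "schroder_ab a b n = (\<Sum>k=0..n. of_nat ((n+k) choose (2*k)) * of_nat (catalan k) * a^(n-k) * b^k)"

end

theory Submission
  imports Defs
begin

(*
  Both sides are polynomials in a and b, so each identity is a statement about the
  coefficients of a^(n-k) b^k.  Expanding (a + b)^(n - 1 - 2j) binomially on the Motzkin side,
  the first identity becomes a refinement of Touchard's identity, expressing the Narayana
  number binom(n,k) binom(n,k+1) / n as  sum_j binom(n-1,2j) C_j binom(n-1-2j,k-j);
  expanding (a + b)^(n - k) on the Catalan side shows S_n^(a,b) = C_n^(a+b,b), via
  sum_k binom(n,k) binom(n,k+1) binom(n-k,m-k) = n binom(n+m,2m) C_m.  Both binomial
  identities reduce to Vandermonde's convolution after the trinomial revision
  binom(n,m) binom(m,k) = binom(n,k) binom(n-k,m-k).  The remaining two identities follow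
  by substituting (a + b, b) and (b, a + b) into the first one.
*)

lemma vandermonde_Suc: "(\<Sum>k\<le>p. (p choose k) * (q choose Suc k)) = (p + q) choose Suc p"
proof -
  have "(p + q) choose Suc p = (\<Sum>i\<le>p. (p choose i) * (q choose (Suc p - i)))"
    by (simp flip: vandermonde)
  also have "\<dots> = (\<Sum>i\<le>p. (p choose (p - i)) * (q choose (Suc p - (p - i))))"
    by (subst sum.atLeastAtMost_rev[of _ 0, simplified atMost_atLeast0[symmetric]]) simp
  also have "\<dots> = (\<Sum>i\<le>p. (p choose i) * (q choose Suc i))"
    by (rule sum.cong) (auto simp: binomial_symmetric[symmetric] Suc_diff_le)
  finally show ?thesis ..
qed

lemma Suc_mult_catalan: "Suc k * catalan k = (2*k) choose k"
proof -
  have "Suc k * ((2*k) choose Suc k) = k * ((2*k) choose k)"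
    using binomial_absorption[of k "2*k"] binomial_absorb_comp[of "2*k" k]
    by (metis add_diff_cancel_right' mult_2)
  then have "(2*k) choose k = Suc k * (((2*k) choose k) - ((2*k) choose Suc k))"
    by (simp add: right_diff_distrib')
  then show ?thesis
    unfolding catalan_def by (metis dvd_triv_left dvd_mult_div_cancel Suc_eq_plus1)
qed

lemma binomial_mult_catalan:
  assumes "m \<le> n"
  shows "(n choose m) * ((m + n) choose Suc m) = n * ((n + m) choose (2*m)) * catalan m"
proof -
  have absorb: "Suc m * ((m + n) choose Suc m) = n * ((n + m) choose m)"
    using binomial_absorption[of m "m+n"] binomial_absorb_comp[of "m+n" m]
    by (simp add: add.commute)
  have split: "((n + m) choose (2*m)) * ((2*m) choose m) = ((n + m) choose m) * (n choose m)"
    using choose_mult[of m "2*m" "n+m"] assms by simp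
  have "Suc m * ((n choose m) * ((m + n) choose Suc m)) = n * (((n + m) choose m) * (n choose m))"
    using absorb by (metis mult.left_commute mult.commute)
  also have "\<dots> = n * (((n + m) choose (2*m)) * ((2*m) choose m))"
    by (simp only: split)
  also have "\<dots> = n * ((n + m) choose (2*m)) * (Suc m * catalan m)"
    by (simp only: Suc_mult_catalan mult.assoc)
  also have "\<dots> = Suc m * (n * ((n + m) choose (2*m)) * catalan m)"
    by (simp only: mult_ac)
  finally show ?thesis
    by (simp only: mult_left_cancel[OF Suc_not_Zero])
qed

lemma narayana_binomial_sum:
  assumes "m \<le> n"
  shows "(\<Sum>k\<le>m. (n choose k) * (n choose Suc k) * ((n - k) choose (m - k)))
       = n * ((n + m) choose (2*m)) * catalan m"
proof -
  have "(\<Sum>k\<le>m. (n choose k) * (n choose Suc k) * ((n - k) choose (m - k)))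
      = (n choose m) * (\<Sum>k\<le>m. (m choose k) * (n choose Suc k))"
    unfolding sum_distrib_left
  proof (rule sum.cong)
    fix k assume "k \<in> {..m}"
    then have "(n choose m) * (m choose k) = (n choose k) * ((n - k) choose (m - k))"
      using choose_mult assms by simp
    then show "(n choose k) * (n choose Suc k) * ((n - k) choose (m - k))
             = (n choose m) * ((m choose k) * (n choose Suc k))"
      by (metis mult.assoc mult.commute)
  qed simp
  also have "\<dots> = n * ((n + m) choose (2*m)) * catalan m"
    by (simp add: vandermonde_Suc binomial_mult_catalan assms)
  finally show ?thesis .
qed

lemma motzkin_narayana_term:
  assumes "j \<le> k" "j + k \<le> N"
  shows "Suc (N - k) * ((N choose (2*j)) * catalan j * ((N - 2*j) choose (k - j)))
       = (N choose k) * (k choose j) * ((Suc N - k) choose Suc j)"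
proof -
  have c1: "(N choose (2*j)) * ((2*j) choose j) = (N choose j) * ((N - j) choose j)"
    using choose_mult[of j "2*j" N] assms by simp
  have c2: "((N - j) choose k) * (k choose j) = ((N - j) choose j) * ((N - 2*j) choose (k - j))"
    using choose_mult[of j k "N - j"] assms by (simp add: diff_diff_add mult_2)
  have c3: "(N choose j) * ((N - j) choose k) = (N choose k) * ((N - k) choose j)"
    using choose_mult[of j "j+k" N] choose_mult[of k "j+k" N] binomial_symmetric[of j "j+k"]
      assms by simp
  have c4: "Suc j * ((Suc N - k) choose Suc j) = Suc (N - k) * ((N - k) choose j)"
    using Suc_times_binomial[of j "N - k"] assms by (simp only: Suc_diff_le)
  have "Suc j * (Suc (N - k) * ((N choose (2*j)) * catalan j * ((N - 2*j) choose (k - j))))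
      = Suc (N - k) * ((N choose (2*j)) * (Suc j * catalan j) * ((N - 2*j) choose (k - j)))"
    by (simp only: mult_ac)
  also have "\<dots> = Suc (N - k) * ((N choose j) * ((N - j) choose k) * (k choose j))"
    by (simp only: Suc_mult_catalan c1 c2[symmetric] mult.assoc)
  also have "\<dots> = (N choose k) * (k choose j) * (Suc (N - k) * ((N - k) choose j))"
    by (simp only: c3 mult_ac)
  also have "\<dots> = Suc j * ((N choose k) * (k choose j) * ((Suc N - k) choose Suc j))"
    by (simp only: c4[symmetric] mult_ac)
  finally show ?thesis
    by (simp only: mult_left_cancel[OF Suc_not_Zero])
qed

lemma narayana_motzkin_sum:
  assumes "k \<le> N"
  shows "Suc N * (\<Sum>j\<le>min k (N - k). (N choose (2*j)) * catalan j * ((N - 2*j) choose (k - j)))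
       = (Suc N choose k) * (Suc N choose Suc k)"
proof -
  define S where "S = (\<Sum>j\<le>min k (N - k). (N choose (2*j)) * catalan j * ((N - 2*j) choose (k - j)))"
  have "Suc (N - k) * S = (N choose k) * (\<Sum>j\<le>min k (N - k). (k choose j) * ((Suc N - k) choose Suc j))"
    unfolding S_def sum_distrib_left
  proof (rule sum.cong)
    fix j assume "j \<in> {..min k (N - k)}"
    then have "j \<le> k" "j + k \<le> N" using assms by auto
    from motzkin_narayana_term[OF this]
    show "Suc (N - k) * ((N choose (2*j)) * catalan j * ((N - 2*j) choose (k - j)))
        = (N choose k) * ((k choose j) * ((Suc N - k) choose Suc j))"
      by (simp only: mult.assoc)
  qed simp
  also have "(\<Sum>j\<le>min k (N - k). (k choose j) * ((Suc N - k) choose Suc j))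
           = (\<Sum>j\<le>k. (k choose j) * ((Suc N - k) choose Suc j))"
    by (rule sum.mono_neutral_left) (auto simp: binomial_eq_0)
  also have "\<dots> = Suc N choose Suc k"
    using vandermonde_Suc[of k "Suc N - k"] assms by simp
  finally have S: "Suc (N - k) * S = (N choose k) * (Suc N choose Suc k)" .
  have absorb: "Suc (N - k) * (Suc N choose k) = Suc N * (N choose k)"
    using binomial_absorb_comp[of "Suc N" k] assms by (simp only: Suc_diff_le diff_Suc_1)
  have "Suc (N - k) * (Suc N * S) = Suc (N - k) * ((Suc N choose k) * (Suc N choose Suc k))"
    by (metis S absorb mult.assoc mult.left_commute)
  then show ?thesis
    unfolding S_def by (simp only: mult_left_cancel[OF Suc_not_Zero])
qed

lemma binomial_ring_shifted:
  fixes x y :: "'a::comm_semiring_1"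
  shows "(x + y)^p * y^j = (\<Sum>k=j..j+p. of_nat (p choose (k - j)) * x^(j + p - k) * y^k)"
proof -
  have "(x + y)^p * y^j = (\<Sum>i=0..p. of_nat (p choose i) * x^(p - i) * y^(i + j))"
    unfolding add.commute[of x] binomial_ring atMost_atLeast0 sum_distrib_right
    by (simp add: power_add mult_ac)
  also have "\<dots> = (\<Sum>k=0+j..p+j. of_nat (p choose (k - j)) * x^(j + p - k) * y^k)"
    by (subst sum.shift_bounds_cl_nat_ivl) simp
  finally show ?thesis by (simp add: add.commute)
qed

lemma of_nat_mult_div_cancel_left:
  "n \<noteq> 0 \<Longrightarrow> 1 / of_nat n * of_nat (n * s) = (of_nat s :: 'a::field_char_0)"
  by (simp add: of_nat_mult)

lemma times_motzkin_ab_eq_double_sum: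
  "a * motzkin_ab (a + b) (a * b) N
   = (\<Sum>j\<in>{0..N div 2}. \<Sum>k\<in>{k. k \<in> {0..N} \<and> j \<le> k \<and> k \<le> N - j}.
        of_nat ((N choose (2*j)) * catalan j * ((N - 2*j) choose (k - j))) * a^(Suc N - k) * b^k)"
  unfolding motzkin_ab_def sum_distrib_left
proof (intro sum.cong refl)
  fix j assume "j \<in> {0..N div 2}"
  then have j: "2*j \<le> N" by auto
  have "a * (of_nat (N choose (2*j)) * of_nat (catalan j) * (a + b)^(N - 2*j) * (a * b)^j)
      = of_nat (N choose (2*j)) * of_nat (catalan j) * a^Suc j * ((a + b)^(N - 2*j) * b^j)"
    by (simp add: power_mult_distrib mult_ac)
  also have "\<dots> = (\<Sum>k=j..N-j.
      of_nat ((N choose (2*j)) * catalan j * ((N - 2*j) choose (k - j))) * a^(Suc N - k) * b^k)"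
    unfolding binomial_ring_shifted sum_distrib_left
  proof (rule sum.cong)
    fix k assume "k \<in> {j..N - j}"
    then have "Suc j + (j + (N - 2*j) - k) = Suc N - k" using j by auto
    then have exponent: "a^Suc j * a^(j + (N - 2*j) - k) = a^(Suc N - k)"
      by (simp only: power_add[symmetric])
    show "of_nat (N choose (2*j)) * of_nat (catalan j) * a^Suc j
        * (of_nat ((N - 2*j) choose (k - j)) * a^(j + (N - 2*j) - k) * b^k)
        = of_nat ((N choose (2*j)) * catalan j * ((N - 2*j) choose (k - j))) * a^(Suc N - k) * b^k"
      unfolding of_nat_mult exponent[symmetric] by (simp only: mult_ac)
  qed (use j in simp)
  also have "{j..N-j} = {k. k \<in> {0..N} \<and> j \<le> k \<and> k \<le> N - j}"
    by auto
  finally show "a * (of_nat (N choose (2*j)) * of_nat (catalan j) * (a + b)^(N - 2*j) * (a * b)^j)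
      = (\<Sum>k\<in>{k. k \<in> {0..N} \<and> j \<le> k \<and> k \<le> N - j}.
          of_nat ((N choose (2*j)) * catalan j * ((N - 2*j) choose (k - j))) * a^(Suc N - k) * b^k)" .
qed

lemma catalan_ab_Suc_eq_motzkin_ab:
  "catalan_ab a b (Suc N) = a * motzkin_ab (a + b) (a * b) N"
proof -
  define t where "t j k = of_nat ((N choose (2*j)) * catalan j * ((N - 2*j) choose (k - j)))
    * a^(Suc N - k) * b^k" for j k
  have "a * motzkin_ab (a + b) (a * b) N
      = (\<Sum>j\<in>{0..N div 2}. \<Sum>k\<in>{k. k \<in> {0..N} \<and> j \<le> k \<and> k \<le> N - j}. t j k)"
    unfolding t_def by (rule times_motzkin_ab_eq_double_sum)
  also have "\<dots> = (\<Sum>k\<in>{0..N}. \<Sum>j\<in>{j. j \<in> {0..N div 2} \<and> j \<le> k \<and> k \<le> N - j}. t j k)"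
    by (rule sum.swap_restrict) simp_all
  also have "\<dots> = (\<Sum>k=0..N. 1 / of_nat (Suc N) * of_nat (Suc N choose k)
      * of_nat (Suc N choose (k + 1)) * a^(Suc N - k) * b^k)"
  proof (rule sum.cong)
    fix k assume "k \<in> {0..N}"
    then have k: "k \<le> N" by simp
    define S where "S = (\<Sum>j\<le>min k (N - k). (N choose (2*j)) * catalan j * ((N - 2*j) choose (k - j)))"
    have "{j. j \<in> {0..N div 2} \<and> j \<le> k \<and> k \<le> N - j} = {..min k (N - k)}"
      using k by auto
    then have "(\<Sum>j\<in>{j. j \<in> {0..N div 2} \<and> j \<le> k \<and> k \<le> N - j}. t j k)
        = of_nat S * a^(Suc N - k) * b^k"
      unfolding t_def S_def of_nat_sum by (simp add: sum_distrib_right)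
    also have "(of_nat S :: complex) = 1 / of_nat (Suc N) * of_nat (Suc N * S)"
      by (rule of_nat_mult_div_cancel_left[symmetric]) simp
    finally show "(\<Sum>j\<in>{j. j \<in> {0..N div 2} \<and> j \<le> k \<and> k \<le> N - j}. t j k)
        = 1 / of_nat (Suc N) * of_nat (Suc N choose k) * of_nat (Suc N choose (k + 1))
          * a^(Suc N - k) * b^k"
      unfolding S_def narayana_motzkin_sum[OF k] by (simp only: of_nat_mult Suc_eq_plus1 mult.assoc)
  qed simp
  also have "\<dots> = catalan_ab a b (Suc N)"
    unfolding catalan_ab_def by simp
  finally show ?thesis ..
qed

lemma catalan_ab_plus_eq_double_sum:
  "catalan_ab (a + b) b n
   = (\<Sum>k\<in>{0..n}. \<Sum>m\<in>{m. m \<in> {0..n} \<and> k \<le> m}.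
        1 / of_nat n * of_nat ((n choose k) * (n choose Suc k) * ((n - k) choose (m - k)))
        * a^(n - m) * b^m)"
proof -
  have "catalan_ab (a + b) b n = (\<Sum>k=0..n. 1 / of_nat n * of_nat (n choose k)
      * of_nat (n choose (k + 1)) * (a + b)^(n - k) * b^k)"
    unfolding catalan_ab_def by (cases n) (simp_all add: binomial_eq_0)
  also have "\<dots> = (\<Sum>k\<in>{0..n}. \<Sum>m=k..k + (n - k).
      1 / of_nat n * of_nat ((n choose k) * (n choose Suc k) * ((n - k) choose (m - k)))
        * a^(n - m) * b^m)"
    unfolding mult.assoc[of _ "(a + b)^_"] binomial_ring_shifted sum_distrib_left
    by (intro sum.cong refl) (auto simp: mult_ac)
  also have "\<dots> = (\<Sum>k\<in>{0..n}. \<Sum>m\<in>{m. m \<in> {0..n} \<and> k \<le> m}.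
      1 / of_nat n * of_nat ((n choose k) * (n choose Suc k) * ((n - k) choose (m - k)))
        * a^(n - m) * b^m)"
    by (intro sum.cong refl) auto
  finally show ?thesis .
qed

lemma schroder_ab_Suc_eq_catalan_ab:
  "schroder_ab a b (Suc N) = catalan_ab (a + b) b (Suc N)"
proof -
  define n where "n = Suc N"
  define u where "u k m = 1 / of_nat n * of_nat ((n choose k) * (n choose Suc k)
    * ((n - k) choose (m - k))) * a^(n - m) * b^m" for k m
  have "catalan_ab (a + b) b n = (\<Sum>k\<in>{0..n}. \<Sum>m\<in>{m. m \<in> {0..n} \<and> k \<le> m}. u k m)"
    unfolding u_def by (rule catalan_ab_plus_eq_double_sum)
  also have "\<dots> = (\<Sum>m\<in>{0..n}. \<Sum>k\<in>{k. k \<in> {0..n} \<and> k \<le> m}. u k m)"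
    by (rule sum.swap_restrict) simp_all
  also have "\<dots> = (\<Sum>m=0..n. of_nat ((n + m) choose (2*m)) * of_nat (catalan m) * a^(n - m) * b^m)"
  proof (rule sum.cong)
    fix m assume "m \<in> {0..n}"
    then have m: "m \<le> n" by simp
    define S where "S = (\<Sum>k\<le>m. (n choose k) * (n choose Suc k) * ((n - k) choose (m - k)))"
    have "{k. k \<in> {0..n} \<and> k \<le> m} = {..m}"
      using m by auto
    then have "(\<Sum>k\<in>{k. k \<in> {0..n} \<and> k \<le> m}. u k m) = 1 / of_nat n * of_nat S * a^(n - m) * b^m"
      unfolding u_def S_def of_nat_sum by (simp add: sum_distrib_left sum_distrib_right)
    also have "\<dots> = of_nat ((n + m) choose (2*m)) * of_nat (catalan m) * a^(n - m) * b^m"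
      unfolding S_def narayana_binomial_sum[OF m] mult.assoc[of n]
      by (subst of_nat_mult_div_cancel_left) (simp_all add: n_def)
    finally show "(\<Sum>k\<in>{k. k \<in> {0..n} \<and> k \<le> m}. u k m)
        = of_nat ((n + m) choose (2*m)) * of_nat (catalan m) * a^(n - m) * b^m" .
  qed simp
  also have "\<dots> = schroder_ab a b n"
    unfolding schroder_ab_def ..
  finally show ?thesis
    unfolding n_def ..
qed

theorem theorem1p3:
  fixes a b :: complex and n :: nat
  assumes "n \<ge> 1"
  shows "catalan_ab a b n = a * motzkin_ab (a + b) (a * b) (n - 1)
       \<and> b * schroder_ab a b n = (a + b) * catalan_ab b (a + b) n
       \<and> schroder_ab a b n = (a + b) * motzkin_ab (a + 2*b) (a*b + b^2) (n - 1)"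
proof -
  obtain N where n: "n = Suc N"
    using assms by (cases n) auto
  have params: "a + b + b = a + 2*b" "b + (a + b) = a + 2*b"
    "(a + b) * b = a*b + b^2" "b * (a + b) = a*b + b^2"
    by (simp_all add: algebra_simps power2_eq_square)
  have schroder: "schroder_ab a b n = (a + b) * motzkin_ab (a + 2*b) (a*b + b^2) N"
    using schroder_ab_Suc_eq_catalan_ab[of a b N] catalan_ab_Suc_eq_motzkin_ab[of "a + b" b N]
    by (simp add: n params)
  have catalan: "catalan_ab b (a + b) n = b * motzkin_ab (a + 2*b) (a*b + b^2) N"
    using catalan_ab_Suc_eq_motzkin_ab[of b "a + b" N] by (simp add: n params)
  show ?thesis
    using catalan_ab_Suc_eq_motzkin_ab[of a b N] schroder catalan by (simp add: n ac_simps)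
qed

end
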